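(* Let $X, Y \subseteq \omega$. There exists a non-order-reversing embedding $f : \mathcal{G}^X \to \mathcal{G}^Y$ if and only if $X \le_e Y$.
   Context: A pca is a set with a partial binary application operation containing distinct $\mathrm{s},\mathrm{k}$ with $\mathrm{k}ab\downarrow=a$, $\mathrm{s}ab\downarrow$, $\mathrm{s}abc\simeq(ac)(bc)$. An embedding of pcas is an injective map $f$ with: if $ab$ is defined then $f(a)f(b)$ is defined and equals $f(ab)$. Scott's graph model: on $\mathcal{P}(\omega)$, $A\cdot B=\{n:\exists u\,(\langle n,u\rangle\in A\wedge D_u\subseteq B)\}$, with $\langle\cdot,\cdot\rangle$ a bijective computable pairing, $\langle 0,0\rangle=0$, and $D_u$ the finite set with canonical code $u$. $\mathcal{G}^Z$ is the least class containing $Z$ and all c.e. sets and closed under this application (equivalently, all sets $\le_e Z$), a pca. $A\le_e Z$ means there is a c.e. relation $R$ with $x\in A\iff\exists u\,(R(x,u)\wedge D_u\subseteq Z)$. An embedding $f:\mathcal{G}^X\to\mathcal{G}^Y$ is order-reversing if for all $A,B\in\mathcal{G}^X$ with $A\subseteq B$ we have $f(B)\subseteq f(A)$. *)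

theory Defs
  imports Main "HOL-Library.Nat_Bijection"
begin

definition proj :: "nat \<Rightarrow> nat list \<Rightarrow> nat" where
  "proj i xs = (if i < length xs then xs ! i else 0)"

definition prec :: "(nat list \<Rightarrow> nat) \<Rightarrow> (nat list \<Rightarrow> nat) \<Rightarrow> nat list \<Rightarrow> nat" where
  "prec g h xs = (case xs of [] \<Rightarrow> g []
      | n # ys \<Rightarrow> rec_nat (g ys) (\<lambda>m r. h (r # m # ys)) n)"

inductive primrec_fn :: "(nat list \<Rightarrow> nat) \<Rightarrow> bool" where
  pr_zero: "primrec_fn (\<lambda>xs. 0)"
| pr_succ: "primrec_fn (\<lambda>xs. Suc (proj 0 xs))"
| pr_proj: "primrec_fn (proj i)"
| pr_comp: "primrec_fn f \<Longrightarrow> (\<forall>g\<in>set gs. primrec_fn g) \<Longrightarrow>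
            primrec_fn (\<lambda>xs. f (map (\<lambda>g. g xs) gs))"
| pr_rec: "primrec_fn g \<Longrightarrow> primrec_fn h \<Longrightarrow> primrec_fn (prec g h)"

text \<open>A set of naturals is c.e. iff it is the projection of a primitive recursive relation
  (Kleene normal form); likewise for binary relations.\<close>
definition ce_set :: "nat set \<Rightarrow> bool" where
  "ce_set S \<longleftrightarrow> (\<exists>p. primrec_fn p \<and> S = {x. \<exists>y. p [x, y] = 0})"

definition ce_rel :: "(nat \<Rightarrow> nat \<Rightarrow> bool) \<Rightarrow> bool" where
  "ce_rel R \<longleftrightarrow> (\<exists>p. primrec_fn p \<and> (\<forall>x u. R x u \<longleftrightarrow> (\<exists>y. p [x, u, y] = 0)))"

text \<open>D u: the finite set with canonical code u (u = sum of 2^i over i in D u).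
  Pairing: Cantor pairing prod_encode, a computable bijection with prod_encode (0,0) = 0.\<close>
abbreviation D :: "nat \<Rightarrow> nat set" where "D u \<equiv> set_decode u"

definition pair :: "nat \<Rightarrow> nat \<Rightarrow> nat" where "pair n u = prod_encode (n, u)"

definition e_reducible :: "nat set \<Rightarrow> nat set \<Rightarrow> bool" (infix "\<le>\<^sub>e" 50) where
  "A \<le>\<^sub>e Z \<longleftrightarrow> (\<exists>R. ce_rel R \<and> (\<forall>x. x \<in> A \<longleftrightarrow> (\<exists>u. R x u \<and> D u \<subseteq> Z)))"

definition gapp :: "nat set \<Rightarrow> nat set \<Rightarrow> nat set" where
  "gapp A B = {n. \<exists>u. pair n u \<in> A \<and> D u \<subseteq> B}"

inductive_set G :: "nat set \<Rightarrow> nat set set" for Z :: "nat set" where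
  G_base: "Z \<in> G Z"
| G_ce: "ce_set S \<Longrightarrow> S \<in> G Z"
| G_app: "A \<in> G Z \<Longrightarrow> B \<in> G Z \<Longrightarrow> gapp A B \<in> G Z"

text \<open>Embedding of pcas G^X \<rightarrow> G^Y (application in G is total).\<close>
definition pca_embedding :: "nat set \<Rightarrow> nat set \<Rightarrow> (nat set \<Rightarrow> nat set) \<Rightarrow> bool" where
  "pca_embedding X Y f \<longleftrightarrow>
     (\<forall>A\<in>G X. f A \<in> G Y) \<and> inj_on f (G X) \<and>
     (\<forall>A\<in>G X. \<forall>B\<in>G X. f (gapp A B) = gapp (f A) (f B))"

definition order_reversing :: "nat set \<Rightarrow> (nat set \<Rightarrow> nat set) \<Rightarrow> bool" where
  "order_reversing X f \<longleftrightarrow> (\<forall>A\<in>G X. \<forall>B\<in>G X. A \<subseteq> B \<longrightarrow> f B \<subseteq> f A)"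

end

(* If f is an embedding that is not order-reversing, pick A \<subseteq> B in G X and
   m \<in> f B - f A.  A c.e. combinator W satisfies W A B {n} Z = (if n \<in> Z then B else A),
   and the numeral {n} is the n-th iterate S^n {0} of a c.e. successor combinator S.
   As f preserves application,
     n \<in> X  \<longleftrightarrow>  m \<in> f (W A B) (f S ^ n (f {0})) (f X),
   and the right-hand side is enumeration reducible to Y uniformly in n: every member of
   G Y is (G Y consists exactly of the sets \<le>e Y), and a finite part of an iterated
   application is witnessed by a finite chain of finite sets, coded by one number.
   Conversely, if X \<le>e Y then G X \<subseteq> G Y, the inclusion is an embedding, and it does
   not reverse {} \<subseteq> UNIV. *)

theory Submission
  imports Defs
begin

section \<open>Primitive recursive functions\<close>

lemma proj_Cons_0 [simp]: "proj 0 (a # xs) = a"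
  by (simp add: proj_def)

lemma proj_Cons_Suc [simp]: "proj (Suc i) (a # xs) = proj i xs"
  by (simp add: proj_def)

lemma proj_Nil [simp]: "proj i [] = 0"
  by (simp add: proj_def)

lemma proj_tl [simp]: "proj i (tl xs) = proj (Suc i) xs"
  by (cases xs) (auto simp: proj_def)

text \<open>Substituting an arbitrary list-valued function into a primitive recursive function
  is reduced to the rule pr_comp, which only takes a finite list of functions, by observing
  that a primitive recursive function reads only a bounded prefix of its arguments.\<close>

definition prefix_args :: "nat \<Rightarrow> nat list \<Rightarrow> nat list" where
  "prefix_args N xs = map (\<lambda>i. proj i xs) [0..<N]"

lemma proj_prefix_args: "proj i (prefix_args N xs) = (if i < N then proj i xs else 0)"
  by (simp add: prefix_args_def proj_def)

lemma prefix_args_prefix_args: "N \<le> M \<Longrightarrow> prefix_args N (prefix_args M xs) = prefix_args N xs"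
  unfolding prefix_args_def[of N] by (auto simp: proj_prefix_args)

lemma prefix_args_Cons: "prefix_args (Suc M) (n # xs) = n # prefix_args M xs"
  by (simp add: prefix_args_def upt_conv_Cons map_Suc_upt[symmetric] del: upt_Suc)

lemma prefix_args_Nil: "prefix_args M [] = replicate M 0"
  by (simp add: prefix_args_def map_replicate_const)

definition depends_on_prefix :: "nat \<Rightarrow> (nat list \<Rightarrow> nat) \<Rightarrow> bool" where
  "depends_on_prefix N F \<longleftrightarrow> (\<forall>xs. F xs = F (prefix_args N xs))"

lemma depends_on_prefix_mono: "depends_on_prefix N F \<Longrightarrow> N \<le> M \<Longrightarrow> depends_on_prefix M F"
  unfolding depends_on_prefix_def by (metis prefix_args_prefix_args)

lemma depends_on_prefix_list:
  "\<forall>g\<in>set gs. \<exists>N. depends_on_prefix N g \<Longrightarrow> \<exists>N. \<forall>g\<in>set gs. depends_on_prefix N g"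
proof (induction gs)
  case (Cons g gs)
  then obtain N M where "\<forall>g\<in>set gs. depends_on_prefix N g" "depends_on_prefix M g" by auto
  then show ?case by (intro exI[of _ "max N M"]) (auto intro: depends_on_prefix_mono)
qed simp

lemma depends_on_prefix_prec:
  assumes g: "depends_on_prefix M g" and h: "depends_on_prefix (Suc (Suc M)) h"
  shows "depends_on_prefix (Suc M) (prec g h)"
  unfolding depends_on_prefix_def
proof
  fix xs show "prec g h xs = prec g h (prefix_args (Suc M) xs)"
  proof (cases xs)
    case Nil
    have "g [] = g (replicate M 0)"
      using g by (simp add: depends_on_prefix_def prefix_args_Nil[symmetric])
    then show ?thesis using Nil by (simp add: prec_def prefix_args_Nil)
  next
    case (Cons n ys)
    have "g ys = g (prefix_args M ys)" using g by (simp add: depends_on_prefix_def)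
    moreover have "h (r # m # ys) = h (r # m # prefix_args M ys)" for r m
      using h unfolding depends_on_prefix_def by (metis prefix_args_Cons)
    ultimately show ?thesis using Cons by (simp add: prec_def prefix_args_Cons)
  qed
qed

lemma primrec_fn_depends_on_prefix: "primrec_fn F \<Longrightarrow> \<exists>N. depends_on_prefix N F"
proof (induction rule: primrec_fn.induct)
  case pr_zero
  then show ?case by (auto simp: depends_on_prefix_def)
next
  case pr_succ
  then show ?case by (intro exI[of _ 1]) (auto simp: depends_on_prefix_def proj_prefix_args)
next
  case (pr_proj i)
  then show ?case
    by (intro exI[of _ "Suc i"]) (auto simp: depends_on_prefix_def proj_prefix_args)
next
  case (pr_comp f gs)
  then obtain N where "\<forall>g\<in>set gs. depends_on_prefix N g" using depends_on_prefix_list by blast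
  then show ?case by (intro exI[of _ N]) (auto simp: depends_on_prefix_def intro!: arg_cong[where f=f])
next
  case (pr_rec g h)
  then obtain N1 N2 where "depends_on_prefix N1 g" "depends_on_prefix N2 h" by auto
  then have "depends_on_prefix (Suc (max N1 N2)) (prec g h)"
    by (intro depends_on_prefix_prec) (auto intro: depends_on_prefix_mono)
  then show ?case by blast
qed

definition primrec_list_fn :: "(nat list \<Rightarrow> nat list) \<Rightarrow> bool" where
  "primrec_list_fn L \<longleftrightarrow> (\<forall>i. primrec_fn (\<lambda>xs. proj i (L xs)))"

named_theorems primrec_intros

lemma primrec_fn_comp_list:
  assumes F: "primrec_fn F" and L: "primrec_list_fn L"
  shows "primrec_fn (\<lambda>xs. F (L xs))"
proof -
  obtain N where N: "depends_on_prefix N F" using primrec_fn_depends_on_prefix[OF F] by blast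
  let ?gs = "map (\<lambda>i xs. proj i (L xs)) [0..<N]"
  have "primrec_fn (\<lambda>xs. F (map (\<lambda>g. g xs) ?gs))"
    using L F by (intro pr_comp) (auto simp: primrec_list_fn_def)
  moreover have "(\<lambda>xs. F (map (\<lambda>g. g xs) ?gs)) = (\<lambda>xs. F (L xs))"
    using N by (auto simp: depends_on_prefix_def prefix_args_def comp_def)
  ultimately show ?thesis by simp
qed

lemma primrec_fn_comp_listI:
  "primrec_fn F \<Longrightarrow> primrec_list_fn L \<Longrightarrow> H = (\<lambda>xs. F (L xs)) \<Longrightarrow> primrec_fn H"
  using primrec_fn_comp_list by blast

lemma primrec_fn_proj [primrec_intros]: "primrec_fn (\<lambda>xs. proj i xs)"
  using pr_proj[of i] by (simp add: eta_contract_eq)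

lemma primrec_fn_const [primrec_intros]: "primrec_fn (\<lambda>xs. c)"
proof (induction c)
  case 0
  then show ?case by (rule pr_zero)
next
  case (Suc c)
  have "primrec_fn (\<lambda>xs. (\<lambda>ys. Suc (proj 0 ys)) (map (\<lambda>g. g xs) [\<lambda>xs. c]))"
    by (rule pr_comp[OF pr_succ]) (use Suc in auto)
  then show ?case by simp
qed

lemma primrec_fn_proj_list [primrec_intros]:
  "primrec_list_fn L \<Longrightarrow> primrec_fn (\<lambda>xs. proj i (L xs))"
  by (simp add: primrec_list_fn_def)

lemma primrec_list_fn_id [primrec_intros]: "primrec_list_fn (\<lambda>xs. xs)"
  by (simp add: primrec_list_fn_def primrec_fn_proj)

lemma primrec_list_fn_Nil [primrec_intros]: "primrec_list_fn (\<lambda>xs. [])"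
  by (simp add: primrec_list_fn_def primrec_fn_const)

lemma primrec_list_fn_tl [primrec_intros]: "primrec_list_fn L \<Longrightarrow> primrec_list_fn (\<lambda>xs. tl (L xs))"
  by (simp add: primrec_list_fn_def)

lemma primrec_list_fn_Cons [primrec_intros]:
  "primrec_fn a \<Longrightarrow> primrec_list_fn L \<Longrightarrow> primrec_list_fn (\<lambda>xs. a xs # L xs)"
  unfolding primrec_list_fn_def
proof
  fix i
  assume "primrec_fn a" "\<forall>i. primrec_fn (\<lambda>xs. proj i (L xs))"
  then show "primrec_fn (\<lambda>xs. proj i (a xs # L xs))" by (cases i) auto
qed

lemma primrec_list_fn_comp:
  "primrec_list_fn L \<Longrightarrow> primrec_list_fn M \<Longrightarrow> primrec_list_fn (\<lambda>xs. L (M xs))"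
  unfolding primrec_list_fn_def
proof
  fix i
  assume L: "\<forall>i. primrec_fn (\<lambda>xs. proj i (L xs))" and M: "\<forall>i. primrec_fn (\<lambda>xs. proj i (M xs))"
  show "primrec_fn (\<lambda>xs. proj i (L (M xs)))"
    using primrec_fn_comp_list[OF L[rule_format, of i], of M] M by (simp add: primrec_list_fn_def)
qed

lemma primrec_fn_Suc [primrec_intros]: "primrec_fn a \<Longrightarrow> primrec_fn (\<lambda>xs. Suc (a xs))"
  by (rule primrec_fn_comp_listI[OF pr_succ, where L="\<lambda>xs. [a xs]"]) (simp_all add: primrec_intros)

lemma primrec_fn_rec_natI:
  assumes "primrec_fn b" "primrec_fn n" "primrec_fn (\<lambda>ys. s (proj 0 ys) (proj 1 ys) (tl (tl ys)))"
    and "\<And>xs. F xs = rec_nat (b xs) (\<lambda>m r. s r m xs) (n xs)"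
  shows "primrec_fn F"
proof -
  let ?h = "\<lambda>ys. s (proj 0 ys) (proj 1 ys) (tl (tl ys))"
  have "primrec_fn (\<lambda>xs. prec b ?h (n xs # xs))"
    by (rule primrec_fn_comp_list[OF pr_rec[OF assms(1,3)]]) (intro primrec_intros assms(2))
  moreover have "F = (\<lambda>xs. prec b ?h (n xs # xs))"
    by (simp add: assms(4) prec_def fun_eq_iff)
  ultimately show ?thesis by simp
qed

lemma primrec_fn_add [primrec_intros]:
  assumes "primrec_fn a" "primrec_fn b"
  shows "primrec_fn (\<lambda>xs. a xs + b xs)"
proof -
  have rec: "rec_nat x (\<lambda>m r. Suc r) n = x + n" for x n :: nat by (induction n) auto
  show ?thesis
    by (rule primrec_fn_rec_natI[where b=a and n=b and s="\<lambda>r m xs. Suc r"])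
      (use rec in \<open>simp_all add: assms primrec_intros\<close>)
qed

lemma primrec_fn_sub [primrec_intros]:
  assumes "primrec_fn a" "primrec_fn b"
  shows "primrec_fn (\<lambda>xs. a xs - b xs)"
proof -
  have rec_pred: "rec_nat 0 (\<lambda>m r. m) n = n - Suc 0" for n :: nat by (induction n) auto
  have pred: "primrec_fn (\<lambda>xs. proj 0 xs - Suc 0)"
    by (rule primrec_fn_rec_natI[where b="\<lambda>xs. 0" and n="proj 0" and s="\<lambda>r m xs. m"])
      (use rec_pred in \<open>simp_all add: primrec_intros\<close>)
  have rec: "rec_nat x (\<lambda>m r. r - Suc 0) n = x - n" for x n :: nat by (induction n) auto
  show ?thesis
    by (rule primrec_fn_rec_natI[where b=a and n=b and s="\<lambda>r m xs. r - Suc 0"])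
      (use rec in \<open>simp_all add: assms pred\<close>)
qed

lemma primrec_fn_mult [primrec_intros]:
  assumes "primrec_fn a" "primrec_fn b"
  shows "primrec_fn (\<lambda>xs. a xs * b xs)"
proof -
  have step: "primrec_fn (\<lambda>ys. a (tl (tl ys)))"
    by (rule primrec_fn_comp_listI[OF assms(1)]) (simp_all add: primrec_intros)
  have rec: "rec_nat 0 (\<lambda>m r. r + x) n = x * n" for x n :: nat by (induction n) auto
  show ?thesis
    by (rule primrec_fn_rec_natI[where b="\<lambda>xs. 0" and n=b and s="\<lambda>r m xs. r + a xs"])
      (use rec step in \<open>simp_all add: assms primrec_intros\<close>)
qed

lemma primrec_fn_if_zero [primrec_intros]:
  assumes "primrec_fn q" "primrec_fn a" "primrec_fn b"
  shows "primrec_fn (\<lambda>xs. if q xs = 0 then a xs else b xs)"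
proof -
  have step: "primrec_fn (\<lambda>ys. b (tl (tl ys)))"
    by (rule primrec_fn_comp_listI[OF assms(3)]) (simp_all add: primrec_intros)
  have rec: "rec_nat x (\<lambda>m r. y) n = (if n = 0 then x else y)" for x y n :: nat
    by (cases n) auto
  show ?thesis
    by (rule primrec_fn_rec_natI[where b=a and n=q and s="\<lambda>r m xs. b xs"])
      (use rec step in \<open>simp_all add: assms\<close>)
qed

lemma primrec_fn_power_2 [primrec_intros]:
  assumes "primrec_fn a"
  shows "primrec_fn (\<lambda>xs. 2 ^ a xs)"
proof -
  have rec: "rec_nat 1 (\<lambda>m r. r + r) n = (2::nat) ^ n" for n by (induction n) auto
  show ?thesis
    by (rule primrec_fn_rec_natI[where b="\<lambda>xs. 1" and n=a and s="\<lambda>r m xs. r + r"])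
      (use rec in \<open>simp_all add: assms primrec_intros\<close>)
qed

lemma primrec_fn_mod_2 [primrec_intros]:
  assumes "primrec_fn a"
  shows "primrec_fn (\<lambda>xs. a xs mod 2)"
proof -
  have rec: "rec_nat 0 (\<lambda>m r. Suc 0 - r) n = n mod 2" for n :: nat
    by (induction n) (auto simp: mod_Suc)
  show ?thesis
    by (rule primrec_fn_rec_natI[where b="\<lambda>xs. 0" and n=a and s="\<lambda>r m xs. Suc 0 - r"])
      (use rec in \<open>simp_all add: assms primrec_intros\<close>)
qed

lemma primrec_fn_div_power_2 [primrec_intros]:
  assumes "primrec_fn a" "primrec_fn b"
  shows "primrec_fn (\<lambda>xs. a xs div 2 ^ b xs)"
proof -
  have rec_half: "rec_nat 0 (\<lambda>m r. r + m mod 2) n = n div 2" for n :: nat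
    by (induction n) (simp_all, presburger)
  have half: "primrec_fn (\<lambda>xs. proj 0 xs div 2)"
    by (rule primrec_fn_rec_natI[where b="\<lambda>xs. 0" and n="proj 0" and s="\<lambda>r m xs. r + m mod 2"])
      (use rec_half in \<open>simp_all add: primrec_intros\<close>)
  have rec: "rec_nat x (\<lambda>m r. r div 2) n = x div (2::nat) ^ n" for x n
    by (induction n) (simp_all, metis div_mult2_eq mult.commute)
  show ?thesis
    by (rule primrec_fn_rec_natI[where b=a and n=b and s="\<lambda>r m xs. r div 2"])
      (use rec in \<open>simp_all add: assms half\<close>)
qed

lemma primrec_fn_sum [primrec_intros]:
  assumes "primrec_fn (\<lambda>ys. g (proj 0 ys) (tl ys))" "primrec_fn b"
  shows "primrec_fn (\<lambda>xs. \<Sum>i<b xs. g i xs)"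
proof -
  have step: "primrec_fn (\<lambda>ys. g (proj 1 ys) (tl (tl ys)))"
    by (rule primrec_fn_comp_listI[OF assms(1), where L=tl]) (simp_all add: primrec_intros)
  have rec: "rec_nat 0 (\<lambda>m r. r + g m xs) n = (\<Sum>i<n. g i xs)" for xs n
    by (induction n) auto
  show ?thesis
    by (rule primrec_fn_rec_natI[where b="\<lambda>xs. 0" and n="b" and s="\<lambda>r m xs. r + g m xs"])
      (use rec step in \<open>simp_all add: assms primrec_intros\<close>)
qed

lemma primrec_fn_pair [primrec_intros]:
  assumes "primrec_fn a" "primrec_fn b"
  shows "primrec_fn (\<lambda>xs. pair (a xs) (b xs))"
proof -
  have rec: "rec_nat 0 (\<lambda>m r. r + Suc m) n = triangle n" for n by (induction n) auto
  have "primrec_fn (\<lambda>xs. triangle (proj 0 xs))"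
    by (rule primrec_fn_rec_natI[where b="\<lambda>xs. 0" and n="proj 0" and s="\<lambda>r m xs. r + Suc m"])
      (use rec in \<open>simp_all add: primrec_intros\<close>)
  then have "primrec_fn (\<lambda>xs. triangle (a xs + b xs))"
    by (rule primrec_fn_comp_listI[where L="\<lambda>xs. [a xs + b xs]"]) (simp_all add: assms primrec_intros)
  then show ?thesis
    unfolding pair_def prod_encode_def by (simp add: assms primrec_intros)
qed

text \<open>Decoding pairs is primitive recursive because the components can be found by
  bounded search, written here as a sum with a single nonzero term.\<close>

lemma sum_pair_code_match:
  "(\<Sum>x<Suc n. \<Sum>y<Suc n. if (pair x y - n) + (n - pair x y) = 0 then h x y else 0)
    = h (fst (prod_decode n)) (snd (prod_decode n))"
proof -
  obtain a b where ab: "prod_decode n = (a, b)" by fastforce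
  then have n: "n = prod_encode (a, b)" by (metis prod_decode_inverse)
  have a: "a < Suc n" and b: "b < Suc n"
    using le_prod_encode_1 le_prod_encode_2 n by (auto simp: less_Suc_eq_le)
  have "(pair x y - n) + (n - pair x y) = 0 \<longleftrightarrow> x = a \<and> y = b" for x y
    using n by (auto simp: pair_def)
  then have "(\<Sum>x<Suc n. \<Sum>y<Suc n. if (pair x y - n) + (n - pair x y) = 0 then h x y else 0)
      = (\<Sum>x<Suc n. if x = a then h x b else 0)"
    by (intro sum.cong) (use b in \<open>auto simp: sum.delta\<close>)
  also have "\<dots> = h a b" using a by (simp add: sum.delta')
  finally show ?thesis by (simp add: ab)
qed

lemma primrec_fn_prod_decode [primrec_intros]:
  assumes "primrec_fn a"
  shows "primrec_fn (\<lambda>xs. fst (prod_decode (a xs)))" "primrec_fn (\<lambda>xs. snd (prod_decode (a xs)))"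
proof -
  have "primrec_fn (\<lambda>xs. fst (prod_decode (proj 0 xs)))"
    unfolding sum_pair_code_match[where h="\<lambda>x y. x", symmetric] by (intro primrec_intros)
  then show "primrec_fn (\<lambda>xs. fst (prod_decode (a xs)))"
    by (rule primrec_fn_comp_listI[where L="\<lambda>xs. [a xs]"]) (simp_all add: assms primrec_intros)
  have "primrec_fn (\<lambda>xs. snd (prod_decode (proj 0 xs)))"
    unfolding sum_pair_code_match[where h="\<lambda>x y. y", symmetric] by (intro primrec_intros)
  then show "primrec_fn (\<lambda>xs. snd (prod_decode (a xs)))"
    by (rule primrec_fn_comp_listI[where L="\<lambda>xs. [a xs]"]) (simp_all add: assms primrec_intros)
qed

definition code_nth :: "nat \<Rightarrow> nat \<Rightarrow> nat" where
  "code_nth s k = fst (prod_decode (((\<lambda>x. snd (prod_decode x)) ^^ k) s))"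

lemma primrec_fn_code_nth [primrec_intros]:
  assumes "primrec_fn a" "primrec_fn b"
  shows "primrec_fn (\<lambda>xs. code_nth (a xs) (b xs))"
proof -
  have rec: "(f ^^ k) s = rec_nat s (\<lambda>m r. f r) k" for f :: "nat \<Rightarrow> nat" and k s
    by (induction k) auto
  have "primrec_fn (\<lambda>xs. ((\<lambda>x. snd (prod_decode x)) ^^ b xs) (a xs))"
    by (rule primrec_fn_rec_natI[where b=a and n=b and s="\<lambda>r m xs. snd (prod_decode r)"])
      (use rec in \<open>simp_all add: assms primrec_intros\<close>)
  then show ?thesis unfolding code_nth_def by (simp add: primrec_intros)
qed

lemma code_nth_pair_0 [simp]: "code_nth (pair a s) 0 = a"
  by (simp add: code_nth_def pair_def)

lemma code_nth_Suc: "code_nth s (Suc k) = code_nth (snd (prod_decode s)) k"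
  by (simp add: code_nth_def funpow_Suc_right del: funpow.simps)

lemma code_nth_pair_Suc [simp]: "code_nth (pair a s) (Suc k) = code_nth s k"
  by (simp add: code_nth_Suc pair_def)

lemma ex_code_nth: "\<exists>s. \<forall>i<n. code_nth s i = g i"
proof (induction n arbitrary: g)
  case (Suc n)
  obtain s where "\<forall>i<n. code_nth s i = g (Suc i)" using Suc[of "\<lambda>i. g (Suc i)"] by blast
  then show ?case by (intro exI[of _ "pair (g 0) s"]) (auto simp: less_Suc_eq_0_disj)
qed simp

section \<open>Primitive recursive and c.e. predicates\<close>

definition primrec_pred :: "(nat list \<Rightarrow> bool) \<Rightarrow> bool" where
  "primrec_pred P \<longleftrightarrow> (\<exists>q. primrec_fn q \<and> (\<forall>xs. P xs \<longleftrightarrow> q xs = 0))"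

named_theorems primrec_pred_intros

lemma primrec_pred_eq [primrec_pred_intros]:
  "primrec_fn a \<Longrightarrow> primrec_fn b \<Longrightarrow> primrec_pred (\<lambda>xs. a xs = b xs)"
  unfolding primrec_pred_def
  by (intro exI[of _ "\<lambda>xs. (a xs - b xs) + (b xs - a xs)"]) (auto simp: primrec_intros)

lemma primrec_pred_not [primrec_pred_intros]: "primrec_pred P \<Longrightarrow> primrec_pred (\<lambda>xs. \<not> P xs)"
  unfolding primrec_pred_def
  by (elim exE, rule_tac x="\<lambda>xs. 1 - q xs" in exI) (auto simp: primrec_intros)

lemma primrec_pred_disj [primrec_pred_intros]:
  "primrec_pred P \<Longrightarrow> primrec_pred Q \<Longrightarrow> primrec_pred (\<lambda>xs. P xs \<or> Q xs)"
  unfolding primrec_pred_def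
  by (elim exE, rule_tac x="\<lambda>xs. q xs * qa xs" in exI) (auto simp: primrec_intros)

lemma primrec_pred_imp [primrec_pred_intros]:
  "primrec_pred P \<Longrightarrow> primrec_pred Q \<Longrightarrow> primrec_pred (\<lambda>xs. P xs \<longrightarrow> Q xs)"
  using primrec_pred_disj[OF primrec_pred_not] by simp

lemma primrec_pred_ball [primrec_pred_intros]:
  assumes "primrec_pred (\<lambda>ys. P (proj 0 ys) (tl ys))" "primrec_fn b"
  shows "primrec_pred (\<lambda>xs. \<forall>i<b xs. P i xs)"
proof -
  obtain q where q: "primrec_fn q" and P: "\<And>ys. P (proj 0 ys) (tl ys) \<longleftrightarrow> q ys = 0"
    using assms(1) unfolding primrec_pred_def by blast
  have "primrec_fn (\<lambda>ys. q (proj 0 ys # tl ys))"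
    by (rule primrec_fn_comp_listI[OF q]) (simp_all add: primrec_intros)
  then have "primrec_fn (\<lambda>xs. \<Sum>i<b xs. q (i # xs))" using assms(2) by (simp add: primrec_intros)
  moreover have "(\<forall>i<b xs. P i xs) \<longleftrightarrow> (\<Sum>i<b xs. q (i # xs)) = 0" for xs
    using P[of "_ # _"] by auto
  ultimately show ?thesis unfolding primrec_pred_def by blast
qed

lemma mem_set_decode_less: "i \<in> D u \<Longrightarrow> i < u"
proof -
  assume "i \<in> D u"
  then have "u div 2 ^ i \<noteq> 0" by (auto simp: set_decode_def dest: odd_pos)
  then have "2 ^ i \<le> u" by (simp add: div_eq_0_iff)
  then show ?thesis using less_exp[of i] by linarith
qed

lemma set_decode_power_2 [simp]: "D (2 ^ n) = {n}"
  using set_encode_inverse[of "{n}"] by simp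

lemma set_decode_subset_iff: "D u \<subseteq> B \<longleftrightarrow> (\<forall>i<u. i \<in> D u \<longrightarrow> i \<in> B)"
  using mem_set_decode_less by blast

lemma primrec_pred_mem_set_decode [primrec_pred_intros]:
  assumes "primrec_fn a" "primrec_fn b"
  shows "primrec_pred (\<lambda>xs. a xs \<in> D (b xs))"
proof -
  have "primrec_pred (\<lambda>xs. b xs div 2 ^ a xs mod 2 = 1)"
    using assms by (intro primrec_pred_intros) (simp_all add: primrec_intros)
  then show ?thesis by (simp add: set_decode_def odd_iff_mod_2_eq_one)
qed

lemma primrec_pred_subset_set_decode [primrec_pred_intros]:
  assumes "primrec_fn a" "primrec_fn b"
  shows "primrec_pred (\<lambda>xs. D (a xs) \<subseteq> D (b xs))"
proof -
  have "primrec_fn (\<lambda>ys. a (tl ys))" "primrec_fn (\<lambda>ys. b (tl ys))"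
    by (rule primrec_fn_comp_listI[OF assms(1)] primrec_fn_comp_listI[OF assms(2)];
        simp add: primrec_intros)+
  then have "primrec_pred (\<lambda>xs. \<forall>i<a xs. i \<in> D (a xs) \<longrightarrow> i \<in> D (b xs))"
    using assms by (intro primrec_pred_intros) (simp_all add: primrec_intros)
  then show ?thesis by (simp add: set_decode_subset_iff[symmetric])
qed

definition ce_pred :: "(nat list \<Rightarrow> bool) \<Rightarrow> bool" where
  "ce_pred P \<longleftrightarrow> (\<exists>p. primrec_fn p \<and> (\<forall>xs. P xs \<longleftrightarrow> (\<exists>y. p (y # xs) = 0)))"

named_theorems ce_pred_intros

lemma ce_pred_primrec_pred: "primrec_pred P \<Longrightarrow> ce_pred P"
proof -
  assume "primrec_pred P"
  then obtain q where q: "primrec_fn q" "\<And>xs. P xs \<longleftrightarrow> q xs = 0" unfolding primrec_pred_def by blast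
  have "primrec_fn (\<lambda>ys. q (tl ys))"
    by (rule primrec_fn_comp_listI[OF q(1)]) (simp_all add: primrec_intros)
  then show ?thesis unfolding ce_pred_def using q(2) by (intro exI[of _ "\<lambda>ys. q (tl ys)"]) auto
qed

lemma ce_pred_comp_list: "ce_pred P \<Longrightarrow> primrec_list_fn L \<Longrightarrow> ce_pred (\<lambda>xs. P (L xs))"
proof -
  assume "ce_pred P" and L: "primrec_list_fn L"
  then obtain p where p: "primrec_fn p" "\<And>xs. P xs \<longleftrightarrow> (\<exists>y. p (y # xs) = 0)"
    unfolding ce_pred_def by blast
  have "primrec_list_fn (\<lambda>ys. L (tl ys))"
    using L by (rule primrec_list_fn_comp) (simp add: primrec_intros)
  then have "primrec_fn (\<lambda>ys. p (proj 0 ys # L (tl ys)))"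
    by (intro primrec_fn_comp_list[OF p(1)] primrec_intros)
  then show ?thesis unfolding ce_pred_def using p(2) by (intro exI) auto
qed

lemma ce_pred_conj [ce_pred_intros]: "ce_pred P \<Longrightarrow> ce_pred Q \<Longrightarrow> ce_pred (\<lambda>xs. P xs \<and> Q xs)"
proof -
  assume "ce_pred P" "ce_pred Q"
  then obtain p q where p: "primrec_fn p" "\<And>xs. P xs \<longleftrightarrow> (\<exists>y. p (y # xs) = 0)"
    and q: "primrec_fn q" "\<And>xs. Q xs \<longleftrightarrow> (\<exists>y. q (y # xs) = 0)" unfolding ce_pred_def by metis
  let ?r = "\<lambda>ys. p (fst (prod_decode (proj 0 ys)) # tl ys) + q (snd (prod_decode (proj 0 ys)) # tl ys)"
  have "primrec_fn ?r"
    by (intro primrec_intros primrec_fn_comp_list[OF p(1)] primrec_fn_comp_list[OF q(1)])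
  moreover have "P xs \<and> Q xs \<longleftrightarrow> (\<exists>y. ?r (y # xs) = 0)" for xs
  proof
    assume "P xs \<and> Q xs"
    then obtain y1 y2 where "p (y1 # xs) = 0" "q (y2 # xs) = 0" using p q by blast
    then show "\<exists>y. ?r (y # xs) = 0" by (intro exI[of _ "prod_encode (y1, y2)"]) simp
  qed (use p q in auto)
  ultimately show ?thesis unfolding ce_pred_def by blast
qed

lemma ce_pred_disj [ce_pred_intros]: "ce_pred P \<Longrightarrow> ce_pred Q \<Longrightarrow> ce_pred (\<lambda>xs. P xs \<or> Q xs)"
proof -
  assume "ce_pred P" "ce_pred Q"
  then obtain p q where p: "primrec_fn p" "\<And>xs. P xs \<longleftrightarrow> (\<exists>y. p (y # xs) = 0)"
    and q: "primrec_fn q" "\<And>xs. Q xs \<longleftrightarrow> (\<exists>y. q (y # xs) = 0)" unfolding ce_pred_def by metis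
  have "primrec_fn (\<lambda>ys. p ys * q ys)" using p q by (simp add: primrec_intros)
  moreover have "P xs \<or> Q xs \<longleftrightarrow> (\<exists>y. p (y # xs) * q (y # xs) = 0)" for xs
    using p q by auto
  ultimately show ?thesis unfolding ce_pred_def by blast
qed

lemma ce_pred_ex [ce_pred_intros]: "ce_pred (\<lambda>ys. P (proj 0 ys) (tl ys)) \<Longrightarrow> ce_pred (\<lambda>xs. \<exists>z. P z xs)"
proof -
  assume "ce_pred (\<lambda>ys. P (proj 0 ys) (tl ys))"
  then obtain p where p: "primrec_fn p" "\<And>ys. P (proj 0 ys) (tl ys) \<longleftrightarrow> (\<exists>y. p (y # ys) = 0)"
    unfolding ce_pred_def by blast
  let ?r = "\<lambda>ys. p (fst (prod_decode (proj 0 ys)) # snd (prod_decode (proj 0 ys)) # tl ys)"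
  have "primrec_fn ?r" by (intro primrec_fn_comp_list[OF p(1)] primrec_intros)
  moreover have "(\<exists>z. P z xs) \<longleftrightarrow> (\<exists>y. ?r (y # xs) = 0)" for xs
  proof
    assume "\<exists>z. P z xs"
    then obtain z y where "p (y # z # xs) = 0" using p(2)[of "_ # xs"] by auto
    then show "\<exists>y. ?r (y # xs) = 0" by (intro exI[of _ "prod_encode (y, z)"]) simp
  qed (use p(2)[of "_ # xs"] in auto)
  ultimately show ?thesis unfolding ce_pred_def by blast
qed

text \<open>A bounded universal quantifier is absorbed by coding the finitely many witnesses
  into a single number.\<close>

lemma ce_pred_ball [ce_pred_intros]:
  assumes "ce_pred (\<lambda>ys. P (proj 0 ys) (tl ys))" and b: "primrec_fn b"
  shows "ce_pred (\<lambda>xs. \<forall>i<b xs. P i xs)"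
proof -
  obtain p where p: "primrec_fn p" "\<And>ys. P (proj 0 ys) (tl ys) \<longleftrightarrow> (\<exists>y. p (y # ys) = 0)"
    using assms(1) unfolding ce_pred_def by blast
  let ?r = "\<lambda>ys. \<Sum>i<b (tl ys). p (code_nth (proj 0 ys) i # i # tl ys)"
  have "primrec_fn (\<lambda>ys. b (tl ys))"
    by (rule primrec_fn_comp_listI[OF b]) (simp_all add: primrec_intros)
  moreover have "primrec_fn (\<lambda>zs. p (code_nth (proj 0 (tl zs)) (proj 0 zs) # proj 0 zs # tl (tl zs)))"
    by (intro primrec_fn_comp_list[OF p(1)] primrec_intros)
  ultimately have "primrec_fn ?r" by (intro primrec_fn_sum) auto
  moreover have "(\<forall>i<b xs. P i xs) \<longleftrightarrow> (\<exists>y. ?r (y # xs) = 0)" for xs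
  proof
    assume "\<forall>i<b xs. P i xs"
    then have "\<forall>i<b xs. \<exists>y. p (y # i # xs) = 0" using p(2)[of "_ # xs"] by auto
    then obtain g where g: "\<forall>i<b xs. p (g i # i # xs) = 0" by metis
    obtain s where "\<forall>i<b xs. code_nth s i = g i" using ex_code_nth by blast
    then show "\<exists>y. ?r (y # xs) = 0" using g by (intro exI[of _ s]) simp
  qed (use p(2)[of "_ # xs"] in auto)
  ultimately show ?thesis unfolding ce_pred_def by blast
qed

lemma ce_set_iff_ce_pred: "ce_set S \<longleftrightarrow> ce_pred (\<lambda>xs. proj 0 xs \<in> S)"
proof
  assume "ce_set S"
  then obtain p where p: "primrec_fn p" "S = {x. \<exists>y. p [x, y] = 0}" unfolding ce_set_def by blast
  have "primrec_fn (\<lambda>l. p [proj 1 l, proj 0 l])" by (intro primrec_fn_comp_list[OF p(1)] primrec_intros)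
  moreover have "proj 0 xs \<in> S \<longleftrightarrow> (\<exists>y. p [proj 1 (y # xs), proj 0 (y # xs)] = 0)" for xs
    using p(2) by simp
  ultimately show "ce_pred (\<lambda>xs. proj 0 xs \<in> S)" unfolding ce_pred_def by blast
next
  assume "ce_pred (\<lambda>xs. proj 0 xs \<in> S)"
  then obtain p where p: "primrec_fn p" "\<And>xs. proj 0 xs \<in> S \<longleftrightarrow> (\<exists>y. p (y # xs) = 0)"
    unfolding ce_pred_def by blast
  have "primrec_fn (\<lambda>l. p [proj 1 l, proj 0 l])" by (intro primrec_fn_comp_list[OF p(1)] primrec_intros)
  moreover have "S = {x. \<exists>y. p [proj 1 [x, y], proj 0 [x, y]] = 0}" using p(2)[of "[_]"] by auto
  ultimately show "ce_set S" unfolding ce_set_def by blast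
qed

lemma ce_pred_ce_rel: "ce_rel R \<Longrightarrow> ce_pred (\<lambda>xs. R (proj 0 xs) (proj 1 xs))"
proof -
  assume "ce_rel R"
  then obtain p where p: "primrec_fn p" "\<And>x u. R x u \<longleftrightarrow> (\<exists>y. p [x, u, y] = 0)"
    unfolding ce_rel_def by blast
  have "primrec_fn (\<lambda>l. p [proj 1 l, proj 2 l, proj 0 l])"
    by (intro primrec_fn_comp_list[OF p(1)] primrec_intros)
  moreover have "R (proj 0 xs) (proj 1 xs) \<longleftrightarrow> (\<exists>y. p [proj 1 (y # xs), proj 2 (y # xs), proj 0 (y # xs)] = 0)"
    for xs using p(2) by (simp add: numeral_eq_Suc)
  ultimately show ?thesis unfolding ce_pred_def by blast
qed

section \<open>Enumeration reducibility of predicates\<close>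

definition e_reducible_pred :: "nat set \<Rightarrow> (nat list \<Rightarrow> bool) \<Rightarrow> bool" where
  "e_reducible_pred Y P \<longleftrightarrow> (\<exists>Q. ce_pred Q \<and> (\<forall>xs. P xs \<longleftrightarrow> (\<exists>v. Q (v # xs) \<and> D v \<subseteq> Y)))"

named_theorems e_reducible_pred_intros

lemma e_reducible_pred_ce_pred: "ce_pred P \<Longrightarrow> e_reducible_pred Y P"
proof -
  assume "ce_pred P"
  then have "ce_pred (\<lambda>ys. P (tl ys))" by (rule ce_pred_comp_list) (simp add: primrec_intros)
  moreover have "P xs \<longleftrightarrow> (\<exists>v. P (tl (v # xs)) \<and> D v \<subseteq> Y)" for xs
    by (metis list.sel(3) set_decode_zero empty_subsetI)
  ultimately show ?thesis unfolding e_reducible_pred_def by blast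
qed

lemma e_reducible_pred_primrec_pred: "primrec_pred P \<Longrightarrow> e_reducible_pred Y P"
  by (intro e_reducible_pred_ce_pred ce_pred_primrec_pred)

lemma e_reducible_pred_comp_list:
  "e_reducible_pred Y P \<Longrightarrow> primrec_list_fn L \<Longrightarrow> e_reducible_pred Y (\<lambda>xs. P (L xs))"
proof -
  assume "e_reducible_pred Y P" and L: "primrec_list_fn L"
  then obtain Q where Q: "ce_pred Q" "\<And>xs. P xs \<longleftrightarrow> (\<exists>v. Q (v # xs) \<and> D v \<subseteq> Y)"
    unfolding e_reducible_pred_def by blast
  have "primrec_list_fn (\<lambda>ys. L (tl ys))"
    using L by (rule primrec_list_fn_comp) (simp add: primrec_intros)
  then have "ce_pred (\<lambda>ys. Q (proj 0 ys # L (tl ys)))"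
    by (intro ce_pred_comp_list[OF Q(1)] primrec_intros)
  then show ?thesis unfolding e_reducible_pred_def using Q(2) by (intro exI) auto
qed

lemma e_reducible_pred_mem [e_reducible_pred_intros]:
  assumes "primrec_fn a"
  shows "e_reducible_pred Y (\<lambda>xs. a xs \<in> Y)"
proof -
  have "primrec_fn (\<lambda>ys. a (tl ys))"
    by (rule primrec_fn_comp_listI[OF assms]) (simp_all add: primrec_intros)
  then have "ce_pred (\<lambda>ys. a (tl ys) \<in> D (proj 0 ys))"
    by (intro ce_pred_primrec_pred primrec_pred_intros primrec_intros)
  moreover have "a xs \<in> Y \<longleftrightarrow> (\<exists>v. a xs \<in> D v \<and> D v \<subseteq> Y)" for xs
  proof
    assume "a xs \<in> Y"
    then show "\<exists>v. a xs \<in> D v \<and> D v \<subseteq> Y" by (intro exI[of _ "set_encode {a xs}"]) simp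
  qed auto
  ultimately show ?thesis unfolding e_reducible_pred_def by (intro exI) auto
qed

lemma e_reducible_pred_conj [e_reducible_pred_intros]:
  "e_reducible_pred Y P1 \<Longrightarrow> e_reducible_pred Y P2 \<Longrightarrow> e_reducible_pred Y (\<lambda>xs. P1 xs \<and> P2 xs)"
proof -
  assume "e_reducible_pred Y P1" "e_reducible_pred Y P2"
  then obtain Q1 Q2 where Q1: "ce_pred Q1" "\<And>xs. P1 xs \<longleftrightarrow> (\<exists>v. Q1 (v # xs) \<and> D v \<subseteq> Y)"
    and Q2: "ce_pred Q2" "\<And>xs. P2 xs \<longleftrightarrow> (\<exists>v. Q2 (v # xs) \<and> D v \<subseteq> Y)"
    unfolding e_reducible_pred_def by metis
  let ?Q = "\<lambda>ys. \<exists>v1 v2. Q1 (v1 # tl ys) \<and> Q2 (v2 # tl ys) \<and> D v1 \<subseteq> D (proj 0 ys) \<and> D v2 \<subseteq> D (proj 0 ys)"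
  have "ce_pred (\<lambda>zs. Q1 (proj 0 (tl zs) # tl (tl (tl zs))))"
    and "ce_pred (\<lambda>zs. Q2 (proj 0 zs # tl (tl (tl zs))))"
    by (intro ce_pred_comp_list[OF Q1(1)] ce_pred_comp_list[OF Q2(1)] primrec_intros)+
  then have "ce_pred ?Q"
    by (intro ce_pred_intros) (assumption | rule ce_pred_primrec_pred, intro primrec_pred_intros primrec_intros)+
  moreover have "P1 xs \<and> P2 xs \<longleftrightarrow> (\<exists>v. ?Q (v # xs) \<and> D v \<subseteq> Y)" for xs
  proof
    assume "P1 xs \<and> P2 xs"
    then obtain v1 v2 where "Q1 (v1 # xs)" "D v1 \<subseteq> Y" "Q2 (v2 # xs)" "D v2 \<subseteq> Y"
      using Q1 Q2 by blast
    then show "\<exists>v. ?Q (v # xs) \<and> D v \<subseteq> Y"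
      by (intro exI[of _ "set_encode (D v1 \<union> D v2)"]) auto
  next
    assume "\<exists>v. ?Q (v # xs) \<and> D v \<subseteq> Y"
    then obtain v v1 v2 where "D v \<subseteq> Y" "Q1 (v1 # xs)" "Q2 (v2 # xs)" "D v1 \<subseteq> D v" "D v2 \<subseteq> D v"
      by auto
    then show "P1 xs \<and> P2 xs" unfolding Q1(2) Q2(2) by (meson order_trans)
  qed
  ultimately show ?thesis unfolding e_reducible_pred_def by blast
qed

lemma e_reducible_pred_disj [e_reducible_pred_intros]:
  "e_reducible_pred Y P1 \<Longrightarrow> e_reducible_pred Y P2 \<Longrightarrow> e_reducible_pred Y (\<lambda>xs. P1 xs \<or> P2 xs)"
proof -
  assume "e_reducible_pred Y P1" "e_reducible_pred Y P2"
  then obtain Q1 Q2 where Q1: "ce_pred Q1" "\<And>xs. P1 xs \<longleftrightarrow> (\<exists>v. Q1 (v # xs) \<and> D v \<subseteq> Y)"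
    and Q2: "ce_pred Q2" "\<And>xs. P2 xs \<longleftrightarrow> (\<exists>v. Q2 (v # xs) \<and> D v \<subseteq> Y)"
    unfolding e_reducible_pred_def by metis
  have "ce_pred (\<lambda>ys. Q1 ys \<or> Q2 ys)" using Q1 Q2 by (intro ce_pred_disj)
  moreover have "P1 xs \<or> P2 xs \<longleftrightarrow> (\<exists>v. (Q1 (v # xs) \<or> Q2 (v # xs)) \<and> D v \<subseteq> Y)" for xs
    using Q1 Q2 by blast
  ultimately show ?thesis unfolding e_reducible_pred_def by blast
qed

lemma e_reducible_pred_imp [e_reducible_pred_intros]:
  "primrec_pred P \<Longrightarrow> e_reducible_pred Y Q \<Longrightarrow> e_reducible_pred Y (\<lambda>xs. P xs \<longrightarrow> Q xs)"
  using e_reducible_pred_disj[OF e_reducible_pred_primrec_pred[OF primrec_pred_not]] by simp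

lemma e_reducible_pred_ex [e_reducible_pred_intros]:
  assumes "e_reducible_pred Y (\<lambda>ys. P (proj 0 ys) (tl ys))"
  shows "e_reducible_pred Y (\<lambda>xs. \<exists>z. P z xs)"
proof -
  obtain Q where Q: "ce_pred Q" "\<And>ys. P (proj 0 ys) (tl ys) \<longleftrightarrow> (\<exists>v. Q (v # ys) \<and> D v \<subseteq> Y)"
    using assms unfolding e_reducible_pred_def by blast
  have "ce_pred (\<lambda>zs. Q (proj 1 zs # proj 0 zs # tl (tl zs)))"
    by (intro ce_pred_comp_list[OF Q(1)] primrec_intros)
  then have "ce_pred (\<lambda>ys. \<exists>z. Q (proj 0 ys # z # tl ys))"
    by (intro ce_pred_intros) (simp add: numeral_eq_Suc)
  moreover have "(\<exists>z. P z xs) \<longleftrightarrow> (\<exists>v. (\<exists>z. Q (v # z # xs)) \<and> D v \<subseteq> Y)" for xs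
    using Q(2)[of "_ # _"] by auto
  ultimately show ?thesis
    unfolding e_reducible_pred_def by (intro exI[of _ "\<lambda>ys. \<exists>z. Q (proj 0 ys # z # tl ys)"]) auto
qed

lemma e_reducible_pred_ball [e_reducible_pred_intros]:
  assumes "e_reducible_pred Y (\<lambda>ys. P (proj 0 ys) (tl ys))" and b: "primrec_fn b"
  shows "e_reducible_pred Y (\<lambda>xs. \<forall>i<b xs. P i xs)"
proof -
  obtain Q where Q: "ce_pred Q" "\<And>ys. P (proj 0 ys) (tl ys) \<longleftrightarrow> (\<exists>v. Q (v # ys) \<and> D v \<subseteq> Y)"
    using assms(1) unfolding e_reducible_pred_def by blast
  let ?Q = "\<lambda>ys. \<forall>i<b (tl ys). \<exists>w. Q (w # i # tl ys) \<and> D w \<subseteq> D (proj 0 ys)"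
  have "primrec_fn (\<lambda>ys. b (tl ys))"
    by (rule primrec_fn_comp_listI[OF b]) (simp_all add: primrec_intros)
  moreover have "ce_pred (\<lambda>zs. Q (proj 0 zs # proj 0 (tl zs) # tl (tl (tl zs))))"
    by (intro ce_pred_comp_list[OF Q(1)] primrec_intros)
  ultimately have "ce_pred ?Q"
    by (intro ce_pred_intros) (assumption | rule ce_pred_primrec_pred, intro primrec_pred_intros primrec_intros)+
  moreover have "(\<forall>i<b xs. P i xs) \<longleftrightarrow> (\<exists>v. ?Q (v # xs) \<and> D v \<subseteq> Y)" for xs
  proof
    assume "\<forall>i<b xs. P i xs"
    then have "\<forall>i<b xs. \<exists>w. Q (w # i # xs) \<and> D w \<subseteq> Y" using Q(2)[of "_ # xs"] by auto
    then obtain g where g: "\<forall>i<b xs. Q (g i # i # xs) \<and> D (g i) \<subseteq> Y" by metis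
    then show "\<exists>v. ?Q (v # xs) \<and> D v \<subseteq> Y"
      by (intro exI[of _ "set_encode (\<Union>i<b xs. D (g i))"]) auto
  next
    assume "\<exists>v. ?Q (v # xs) \<and> D v \<subseteq> Y"
    then show "\<forall>i<b xs. P i xs" using Q(2)[of "_ # xs"] by fastforce
  qed
  ultimately show ?thesis unfolding e_reducible_pred_def by blast
qed

lemma e_reducible_iff_pred: "A \<le>\<^sub>e Y \<longleftrightarrow> e_reducible_pred Y (\<lambda>xs. proj 0 xs \<in> A)"
proof
  assume "A \<le>\<^sub>e Y"
  then obtain R where R: "ce_rel R" "\<And>x. x \<in> A \<longleftrightarrow> (\<exists>u. R x u \<and> D u \<subseteq> Y)"
    unfolding e_reducible_def by blast
  have "ce_pred (\<lambda>ys. R (proj 1 ys) (proj 0 ys))"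
    using ce_pred_comp_list[OF ce_pred_ce_rel[OF R(1)], of "\<lambda>ys. [proj 1 ys, proj 0 ys]"]
    by (simp add: primrec_intros)
  then show "e_reducible_pred Y (\<lambda>xs. proj 0 xs \<in> A)"
    unfolding e_reducible_pred_def using R(2) by (intro exI[of _ "\<lambda>ys. R (proj 1 ys) (proj 0 ys)"]) auto
next
  assume "e_reducible_pred Y (\<lambda>xs. proj 0 xs \<in> A)"
  then obtain Q where Q: "ce_pred Q" "\<And>xs. proj 0 xs \<in> A \<longleftrightarrow> (\<exists>v. Q (v # xs) \<and> D v \<subseteq> Y)"
    unfolding e_reducible_pred_def by blast
  then obtain p where p: "primrec_fn p" "\<And>ys. Q ys \<longleftrightarrow> (\<exists>y. p (y # ys) = 0)"
    unfolding ce_pred_def by blast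
  have "primrec_fn (\<lambda>l. p [proj 2 l, proj 1 l, proj 0 l])"
    by (intro primrec_fn_comp_list[OF p(1)] primrec_intros)
  then have "ce_rel (\<lambda>x u. Q [u, x])" unfolding ce_rel_def using p(2)
    by (intro exI[of _ "\<lambda>l. p [proj 2 l, proj 1 l, proj 0 l]"]) (simp add: numeral_eq_Suc)
  moreover have "x \<in> A \<longleftrightarrow> (\<exists>u. Q [u, x] \<and> D u \<subseteq> Y)" for x using Q(2)[of "[x]"] by simp
  ultimately show "A \<le>\<^sub>e Y" unfolding e_reducible_def by blast
qed

lemma e_reducible_pred_mem_set [e_reducible_pred_intros]:
  assumes "A \<le>\<^sub>e Y" "primrec_fn a"
  shows "e_reducible_pred Y (\<lambda>xs. a xs \<in> A)"
  using e_reducible_pred_comp_list[OF assms(1)[unfolded e_reducible_iff_pred], of "\<lambda>xs. [a xs]"]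
  by (simp add: assms(2) primrec_intros)

lemma e_reducible_pred_subset [e_reducible_pred_intros]:
  assumes "A \<le>\<^sub>e Y" "primrec_fn a"
  shows "e_reducible_pred Y (\<lambda>xs. D (a xs) \<subseteq> A)"
proof -
  have "e_reducible_pred Y (\<lambda>xs. \<forall>i<proj 0 xs. i \<in> D (proj 0 xs) \<longrightarrow> i \<in> A)"
    using assms(1) by (intro e_reducible_pred_intros primrec_pred_intros primrec_intros)
  then have "e_reducible_pred Y (\<lambda>xs. D (proj 0 xs) \<subseteq> A)"
    by (simp add: set_decode_subset_iff[symmetric])
  from e_reducible_pred_comp_list[OF this, of "\<lambda>xs. [a xs]"] show ?thesis
    by (simp add: assms primrec_intros)
qed

lemma ce_set_imp_e_reducible: "ce_set S \<Longrightarrow> S \<le>\<^sub>e Y"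
  by (simp add: e_reducible_iff_pred ce_set_iff_ce_pred e_reducible_pred_ce_pred)

lemma e_reducible_refl: "Y \<le>\<^sub>e Y"
  unfolding e_reducible_iff_pred by (intro e_reducible_pred_mem primrec_intros)

section \<open>The graph model\<close>

lemma mem_gapp_iff: "n \<in> gapp A B \<longleftrightarrow> (\<exists>u. pair n u \<in> A \<and> D u \<subseteq> B)"
  by (simp add: gapp_def)

lemma gapp_e_reducible:
  assumes "A \<le>\<^sub>e Y" "B \<le>\<^sub>e Y"
  shows "gapp A B \<le>\<^sub>e Y"
  unfolding e_reducible_iff_pred[of "gapp A B"] mem_gapp_iff
  by (intro e_reducible_pred_intros primrec_intros assms)

lemma e_reducible_of_mem_G: "A \<in> G Y \<Longrightarrow> A \<le>\<^sub>e Y"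
  by (induction rule: G.induct) (auto intro: e_reducible_refl ce_set_imp_e_reducible gapp_e_reducible)

lemma ce_set_pair_graph: "ce_rel R \<Longrightarrow> ce_set {pair x u |x u. R x u}"
proof -
  assume "ce_rel R"
  then have "ce_pred (\<lambda>zs. R (proj 0 (tl zs)) (proj 0 zs))"
    using ce_pred_comp_list[OF ce_pred_ce_rel, of R "\<lambda>zs. [proj 0 (tl zs), proj 0 zs]"]
    by (simp add: primrec_intros)
  then have "ce_pred (\<lambda>xs. \<exists>x u. proj 0 xs = pair x u \<and> R x u)"
    by (intro ce_pred_intros) (assumption | rule ce_pred_primrec_pred, intro primrec_pred_intros primrec_intros)+
  then show ?thesis unfolding ce_set_iff_ce_pred by simp
qed

lemma mem_G_of_e_reducible: "A \<le>\<^sub>e Y \<Longrightarrow> A \<in> G Y"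
proof -
  assume "A \<le>\<^sub>e Y"
  then obtain R where R: "ce_rel R" "\<And>x. x \<in> A \<longleftrightarrow> (\<exists>u. R x u \<and> D u \<subseteq> Y)"
    unfolding e_reducible_def by blast
  have "A = gapp {pair x u |x u. R x u} Y"
    using R(2) by (auto simp: gapp_def pair_def)
  then show "A \<in> G Y" using ce_set_pair_graph[OF R(1)] by (simp add: G.G_app G.G_base G.G_ce)
qed

lemma G_subset_G: "X \<in> G Y \<Longrightarrow> G X \<subseteq> G Y"
proof
  fix A assume "X \<in> G Y" "A \<in> G X"
  then show "A \<in> G Y" by (induction rule: G.induct[OF \<open>A \<in> G X\<close>]) (auto intro: G.intros)
qed

lemma gapp_mono: "B \<subseteq> B' \<Longrightarrow> gapp A B \<subseteq> gapp A B'"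
  unfolding gapp_def by blast

lemma set_decode_subset_gapp_iff: "D a \<subseteq> gapp T Z \<longleftrightarrow> (\<exists>b. D a \<subseteq> gapp T (D b) \<and> D b \<subseteq> Z)"
proof
  assume "D a \<subseteq> gapp T Z"
  then have "\<forall>i\<in>D a. \<exists>w. pair i w \<in> T \<and> D w \<subseteq> Z" unfolding gapp_def by blast
  then obtain g where g: "\<forall>i\<in>D a. pair i (g i) \<in> T \<and> D (g i) \<subseteq> Z" by metis
  have "D (set_encode (\<Union>i\<in>D a. D (g i))) = (\<Union>i\<in>D a. D (g i))" by simp
  then show "\<exists>b. D a \<subseteq> gapp T (D b) \<and> D b \<subseteq> Z"
    using g by (intro exI[of _ "set_encode (\<Union>i\<in>D a. D (g i))"]) (auto simp: gapp_def)
qed (use gapp_mono in blast)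

text \<open>The number s codes the whole chain of intermediate finite sets.\<close>

lemma set_decode_subset_gapp_iter_iff:
  "D u \<subseteq> (gapp T ^^ n) C \<longleftrightarrow>
    (\<exists>s. code_nth s 0 = u \<and> (\<forall>k<n. D (code_nth s k) \<subseteq> gapp T (D (code_nth s (Suc k))))
         \<and> D (code_nth s n) \<subseteq> C)"
proof (induction n arbitrary: u)
  case 0
  show ?case
  proof
    assume "D u \<subseteq> (gapp T ^^ 0) C"
    then show "\<exists>s. code_nth s 0 = u \<and> (\<forall>k<0. D (code_nth s k) \<subseteq> gapp T (D (code_nth s (Suc k))))
        \<and> D (code_nth s 0) \<subseteq> C"
      by (intro exI[of _ "pair u 0"]) simp
  qed auto
next
  case (Suc n)
  have "D u \<subseteq> (gapp T ^^ Suc n) C \<longleftrightarrow> (\<exists>b. D u \<subseteq> gapp T (D b) \<and> D b \<subseteq> (gapp T ^^ n) C)"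
    using set_decode_subset_gapp_iff[of u T "(gapp T ^^ n) C"] by simp
  also have "\<dots> \<longleftrightarrow> (\<exists>s. D u \<subseteq> gapp T (D (code_nth s 0)) \<and>
      (\<forall>k<n. D (code_nth s k) \<subseteq> gapp T (D (code_nth s (Suc k)))) \<and> D (code_nth s n) \<subseteq> C)"
    unfolding Suc.IH by blast
  also have "\<dots> \<longleftrightarrow> (\<exists>s. code_nth s 0 = u \<and>
      (\<forall>k<Suc n. D (code_nth s k) \<subseteq> gapp T (D (code_nth s (Suc k)))) \<and> D (code_nth s (Suc n)) \<subseteq> C)"
  proof
    assume "\<exists>s. D u \<subseteq> gapp T (D (code_nth s 0)) \<and>
      (\<forall>k<n. D (code_nth s k) \<subseteq> gapp T (D (code_nth s (Suc k)))) \<and> D (code_nth s n) \<subseteq> C"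
    then obtain s where "D u \<subseteq> gapp T (D (code_nth s 0))"
      "\<forall>k<n. D (code_nth s k) \<subseteq> gapp T (D (code_nth s (Suc k)))" "D (code_nth s n) \<subseteq> C"
      by blast
    then show "\<exists>s. code_nth s 0 = u \<and>
      (\<forall>k<Suc n. D (code_nth s k) \<subseteq> gapp T (D (code_nth s (Suc k)))) \<and> D (code_nth s (Suc n)) \<subseteq> C"
      by (intro exI[of _ "pair u s"]) (simp add: All_less_Suc2)
  next
    assume "\<exists>s. code_nth s 0 = u \<and>
      (\<forall>k<Suc n. D (code_nth s k) \<subseteq> gapp T (D (code_nth s (Suc k)))) \<and> D (code_nth s (Suc n)) \<subseteq> C"
    then obtain s where "code_nth s 0 = u"
      "\<forall>k<Suc n. D (code_nth s k) \<subseteq> gapp T (D (code_nth s (Suc k)))" "D (code_nth s (Suc n)) \<subseteq> C"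
      by blast
    then show "\<exists>s. D u \<subseteq> gapp T (D (code_nth s 0)) \<and>
      (\<forall>k<n. D (code_nth s k) \<subseteq> gapp T (D (code_nth s (Suc k)))) \<and> D (code_nth s n) \<subseteq> C"
      by (intro exI[of _ "snd (prod_decode s)"]) (simp add: All_less_Suc2 code_nth_Suc)
  qed
  finally show ?case .
qed

lemma e_reducible_pred_subset_gapp_iter [e_reducible_pred_intros]:
  assumes T: "T \<le>\<^sub>e Y" and C: "C \<le>\<^sub>e Y" and "primrec_fn a" "primrec_fn b"
  shows "e_reducible_pred Y (\<lambda>xs. D (a xs) \<subseteq> (gapp T ^^ b xs) C)"
proof -
  have "e_reducible_pred Y (\<lambda>xs. \<exists>s. code_nth s 0 = proj 0 xs \<and>
      (\<forall>k<proj 1 xs. \<forall>i<code_nth s k. i \<in> D (code_nth s k) \<longrightarrow>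
          (\<exists>w. pair i w \<in> T \<and> D w \<subseteq> D (code_nth s (Suc k)))) \<and>
      D (code_nth s (proj 1 xs)) \<subseteq> C)"
    by (intro e_reducible_pred_intros T C)
      (rule e_reducible_pred_primrec_pred | intro primrec_pred_intros primrec_intros)+
  then have "e_reducible_pred Y (\<lambda>xs. D (proj 0 xs) \<subseteq> (gapp T ^^ proj 1 xs) C)"
    by (simp add: set_decode_subset_gapp_iter_iff set_decode_subset_iff[of _ "gapp T _"] mem_gapp_iff)
  from e_reducible_pred_comp_list[OF this, of "\<lambda>xs. [a xs, b xs]"] show ?thesis
    by (simp add: assms primrec_intros)
qed

lemma e_reducible_gapp_iter_index_set:
  assumes "W \<le>\<^sub>e Y" "T \<le>\<^sub>e Y" "C \<le>\<^sub>e Y" "Q \<le>\<^sub>e Y"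
  shows "{n. m \<in> gapp (gapp W ((gapp T ^^ n) C)) Q} \<le>\<^sub>e Y"
  unfolding e_reducible_iff_pred mem_Collect_eq mem_gapp_iff
  by (intro e_reducible_pred_intros primrec_intros assms)

section \<open>Combinators in the graph model\<close>

definition succ_comb :: "nat set" where
  "succ_comb = {pair (Suc k) (2 ^ k) |k. True}"

text \<open>The codes 0 and 2 ^ k denote the finite sets {} and {k}, so each application
  consumes one pair: elements of the first kind take j from A, those of the second kind
  take j from B and n from both N and Z.\<close>

definition select_comb :: "nat set" where
  "select_comb = {pair (pair (pair (pair j 0) 0) 0) (2 ^ j) |j. True} \<union>
     {pair (pair (pair (pair j (2 ^ n)) (2 ^ n)) (2 ^ j)) 0 |j n. True}"

lemma ce_set_succ_comb: "ce_set succ_comb"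
proof -
  have "ce_pred (\<lambda>xs. \<exists>k. proj 0 xs = pair (Suc k) (2 ^ k))"
    by (intro ce_pred_intros ce_pred_primrec_pred primrec_pred_intros primrec_intros)
  then show ?thesis unfolding ce_set_iff_ce_pred succ_comb_def by simp
qed

lemma ce_set_select_comb: "ce_set select_comb"
proof -
  have "ce_pred (\<lambda>xs. (\<exists>j. proj 0 xs = pair (pair (pair (pair j 0) 0) 0) (2 ^ j)) \<or>
     (\<exists>j n. proj 0 xs = pair (pair (pair (pair j (2 ^ n)) (2 ^ n)) (2 ^ j)) 0))"
    by (intro ce_pred_intros ce_pred_primrec_pred primrec_pred_intros primrec_intros)
  then show ?thesis unfolding ce_set_iff_ce_pred select_comb_def by simp
qed

lemma ce_set_singleton: "ce_set {n}"
proof -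
  have "ce_pred (\<lambda>xs. proj 0 xs = n)"
    by (intro ce_pred_primrec_pred primrec_pred_intros primrec_intros)
  then show ?thesis unfolding ce_set_iff_ce_pred by simp
qed

lemma ce_set_empty: "ce_set {}"
  unfolding ce_set_def by (intro exI[of _ "\<lambda>xs. Suc (proj 0 xs)"]) (auto intro: pr_succ)

lemma ce_set_UNIV: "ce_set UNIV"
  unfolding ce_set_def by (intro exI[of _ "\<lambda>xs. 0"]) (auto intro: pr_zero)

lemma gapp_succ_comb_iter: "(gapp succ_comb ^^ n) {0} = {n}"
  by (induction n) (auto simp: succ_comb_def gapp_def pair_def)

lemma gapp_select_comb:
  "gapp (gapp (gapp (gapp select_comb A) B) N) Z = A \<union> {j \<in> B. N \<inter> Z \<noteq> {}}"
proof -
  have "gapp (gapp (gapp select_comb A) B) N =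
      {pair j 0 |j. j \<in> A} \<union> {pair j (2 ^ n) |j n. j \<in> B \<and> n \<in> N}"
    by (auto simp: select_comb_def gapp_def pair_def)
  then show ?thesis by (auto simp: gapp_def pair_def)
qed

lemma G_gapp_iter: "T \<in> G X \<Longrightarrow> C \<in> G X \<Longrightarrow> (gapp T ^^ n) C \<in> G X"
  by (induction n) (auto intro: G.G_app)

lemma pca_embedding_gapp_iter:
  assumes "pca_embedding X Y f" "T \<in> G X" "C \<in> G X"
  shows "f ((gapp T ^^ n) C) = (gapp (f T) ^^ n) (f C)"
  using assms by (induction n) (auto simp: pca_embedding_def G_gapp_iter)

lemma e_reducible_if_embedding_not_order_reversing:
  assumes emb: "pca_embedding X Y f" and "\<not> order_reversing X f"
  shows "X \<le>\<^sub>e Y"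
proof -
  obtain A B m where AB: "A \<in> G X" "B \<in> G X" "A \<subseteq> B" and m: "m \<in> f B" "m \<notin> f A"
    using assms(2) unfolding order_reversing_def by blast
  define W where "W = gapp (gapp select_comb A) B"
  have comb: "succ_comb \<in> G X" "{0} \<in> G X" "W \<in> G X"
    using AB by (auto simp: W_def intro: G.intros ce_set_succ_comb ce_set_singleton ce_set_select_comb)
  have fapp: "f (gapp U V) = gapp (f U) (f V)" if "U \<in> G X" "V \<in> G X" for U V
    using emb that unfolding pca_embedding_def by blast
  have select: "gapp (gapp W ((gapp succ_comb ^^ n) {0})) X = (if n \<in> X then B else A)" for n
    using AB(3) by (auto simp: W_def gapp_select_comb gapp_succ_comb_iter)
  have image: "f (gapp (gapp W ((gapp succ_comb ^^ n) {0})) X)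
      = gapp (gapp (f W) ((gapp (f succ_comb) ^^ n) (f {0}))) (f X)" for n
    using comb by (simp add: fapp G_gapp_iter G.intros pca_embedding_gapp_iter[OF emb])
  have "n \<in> X \<longleftrightarrow> m \<in> gapp (gapp (f W) ((gapp (f succ_comb) ^^ n) (f {0}))) (f X)" for n
    using select[of n] image[of n] m by (cases "n \<in> X") auto
  then have "X = {n. m \<in> gapp (gapp (f W) ((gapp (f succ_comb) ^^ n) (f {0}))) (f X)}"
    by blast
  also have "\<dots> \<le>\<^sub>e Y"
    using emb comb G.G_base unfolding pca_embedding_def
    by (intro e_reducible_gapp_iter_index_set e_reducible_of_mem_G) auto
  finally show ?thesis .
qed

lemma pca_embedding_id: "X \<in> G Y \<Longrightarrow> pca_embedding X Y id"
  unfolding pca_embedding_def using G_subset_G by auto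

lemma not_order_reversing_id: "\<not> order_reversing X id"
proof
  assume "order_reversing X id"
  moreover have "{} \<in> G X" "UNIV \<in> G X" using ce_set_empty ce_set_UNIV by (auto intro: G.G_ce)
  ultimately have "(UNIV :: nat set) \<subseteq> {}" unfolding order_reversing_def by fastforce
  then show False by simp
qed

theorem theorem7p10:
  fixes X Y :: "nat set"
  shows "(\<exists>f. pca_embedding X Y f \<and> \<not> order_reversing X f) \<longleftrightarrow> X \<le>\<^sub>e Y"
proof
  assume "\<exists>f. pca_embedding X Y f \<and> \<not> order_reversing X f"
  then show "X \<le>\<^sub>e Y" using e_reducible_if_embedding_not_order_reversing by blast
next
  assume "X \<le>\<^sub>e Y"
  then have "pca_embedding X Y id" by (intro pca_embedding_id mem_G_of_e_reducible)
  then show "\<exists>f. pca_embedding X Y f \<and> \<not> order_reversing X f"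
    using not_order_reversing_id by blast
qed

end
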